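(* The number of ordinary $k\times k$ permutation matrices is $k!-o(k!)$ as $k\to\infty$; i.e. almost all $k\times k$ permutation matrices are ordinary.
   Context: Say a permutation matrix $P$ reduces to a class if some matrix obtainable from $P$ by a sequence of vertical/horizontal reflections and $90$-degree rotations lies in that class. A permutation matrix is ordinary if it reduces to none of the following four classes. "Splitting the rows into contiguous nonempty sets $R_1,R_2,\dots$" means the rows of $R_1$ precede those of $R_2$, etc., and similarly for columns. Class 1: permutation matrices $P$ whose rows split into contiguous nonempty $R_1,R_2$ and columns into contiguous nonempty $C_1,C_2$ such that $P$ has ones in $R_1\times C_1$ and in $R_2\times C_2$, and all ones of $P$ lie in these two submatrices except for at most $2$ ones in $R_1\times C_2$; if there are two ones in $R_1\times C_2$, they are in adjacent rows. Class 2: permutation matrices $P$ whose rows split into contiguous nonempty $R_1,R_2,R_3$ and columns into contiguous nonempty $C_1,C_2$ such that $P$ has ones in $R_1\times C_2$ and in $R_3\times C_2$, at least two ones in $R_2\times C_1$, and all ones of $P$ lie in these three submatrices except for at most $2$ ones in $R_2\times C_2$; if there are two ones in $R_2\times C_2$, they are in adjacent rows. Class 3: permutation matrices obtained from some element $X$ of Class 2 (with its sets $R_1,R_2,R_3,C_1,C_2$) by taking the row $r$ of $X$ containing the rightmost one in $R_2\times C_1$, deleting $r$ from its position, and inserting it above the first row of $X$. Class 4: permutation matrices $P$ whose rows split into contiguous nonempty $R_1,R_2,R_3$ and columns into contiguous nonempty $C_1,C_2,C_3$ such that $P$ has ones in each of $R_1\times C_2$, $R_2\times C_1$, $R_2\times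 C_3$, $R_3\times C_2$, and only in these submatrices. *)

theory Defs
  imports Main "HOL-Library.Landau_Symbols"
begin

text \<open>A k x k 0/1 matrix is represented by the set of positions (row, column) of its ones,
rows and columns indexed by 0..k-1, row 0 being the top row and column 0 the leftmost.\<close>

definition perm_mat :: "nat \<Rightarrow> (nat \<times> nat) set \<Rightarrow> bool" where
  "perm_mat k P \<longleftrightarrow> P \<subseteq> {..<k} \<times> {..<k}
     \<and> (\<forall>i<k. \<exists>!j. (i, j) \<in> P) \<and> (\<forall>j<k. \<exists>!i. (i, j) \<in> P)"

definition vrefl :: "nat \<Rightarrow> (nat \<times> nat) set \<Rightarrow> (nat \<times> nat) set" where
  "vrefl k P = (\<lambda>(i, j). (i, k - 1 - j)) ` P"

definition hrefl :: "nat \<Rightarrow> (nat \<times> nat) set \<Rightarrow> (nat \<times> nat) set" where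
  "hrefl k P = (\<lambda>(i, j). (k - 1 - i, j)) ` P"

definition rot90 :: "nat \<Rightarrow> (nat \<times> nat) set \<Rightarrow> (nat \<times> nat) set" where
  "rot90 k P = (\<lambda>(i, j). (j, k - 1 - i)) ` P"

inductive sym_reach :: "nat \<Rightarrow> (nat \<times> nat) set \<Rightarrow> (nat \<times> nat) set \<Rightarrow> bool"
  for k :: nat and P :: "(nat \<times> nat) set" where
  refl: "sym_reach k P P"
| vstep: "sym_reach k P Q \<Longrightarrow> sym_reach k P (vrefl k Q)"
| hstep: "sym_reach k P Q \<Longrightarrow> sym_reach k P (hrefl k Q)"
| rstep: "sym_reach k P Q \<Longrightarrow> sym_reach k P (rot90 k Q)"

definition few_adjacent :: "(nat \<times> nat) set \<Rightarrow> (nat \<times> nat) set \<Rightarrow> bool" where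
  "few_adjacent P S \<longleftrightarrow> card (P \<inter> S) \<le> 2 \<and>
     (card (P \<inter> S) = 2 \<longrightarrow>
        (\<forall>x\<in>P \<inter> S. \<forall>y\<in>P \<inter> S. x \<noteq> y \<longrightarrow> fst x = fst y + 1 \<or> fst y = fst x + 1))"

text \<open>Class 1: rows R1 = {0..<a}, R2 = {a..<k}; columns C1 = {0..<b}, C2 = {b..<k}.\<close>

definition class1 :: "nat \<Rightarrow> (nat \<times> nat) set \<Rightarrow> bool" where
  "class1 k P \<longleftrightarrow> perm_mat k P \<and> (\<exists>a b. 0 < a \<and> a < k \<and> 0 < b \<and> b < k \<and>
     P \<inter> ({0..<a} \<times> {0..<b}) \<noteq> {} \<and>
     P \<inter> ({a..<k} \<times> {b..<k}) \<noteq> {} \<and>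
     P \<subseteq> ({0..<a} \<times> {0..<b}) \<union> ({a..<k} \<times> {b..<k}) \<union> ({0..<a} \<times> {b..<k}) \<and>
     few_adjacent P ({0..<a} \<times> {b..<k}))"

text \<open>Class 2 with respect to a given splitting: rows R1 = {0..<a}, R2 = {a..<b},
  R3 = {b..<k}; columns C1 = {0..<c}, C2 = {c..<k}.\<close>

definition class2_split :: "nat \<Rightarrow> (nat \<times> nat) set \<Rightarrow> nat \<Rightarrow> nat \<Rightarrow> nat \<Rightarrow> bool" where
  "class2_split k P a b c \<longleftrightarrow> perm_mat k P \<and>
     0 < a \<and> a < b \<and> b < k \<and> 0 < c \<and> c < k \<and>
     P \<inter> ({0..<a} \<times> {c..<k}) \<noteq> {} \<and>
     P \<inter> ({b..<k} \<times> {c..<k}) \<noteq> {} \<and>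
     card (P \<inter> ({a..<b} \<times> {0..<c})) \<ge> 2 \<and>
     P \<subseteq> ({0..<a} \<times> {c..<k}) \<union> ({b..<k} \<times> {c..<k}) \<union> ({a..<b} \<times> {0..<c})
          \<union> ({a..<b} \<times> {c..<k}) \<and>
     few_adjacent P ({a..<b} \<times> {c..<k})"

definition class2 :: "nat \<Rightarrow> (nat \<times> nat) set \<Rightarrow> bool" where
  "class2 k P \<longleftrightarrow> (\<exists>a b c. class2_split k P a b c)"

definition move_row_top :: "nat \<Rightarrow> (nat \<times> nat) set \<Rightarrow> (nat \<times> nat) set" where
  "move_row_top r P = (\<lambda>(i, j). if i = r then (0, j) else if i < r then (i + 1, j) else (i, j)) ` P"

text \<open>Class 3: r is the row of X containing the rightmost one in R2 x C1.\<close>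

definition class3 :: "nat \<Rightarrow> (nat \<times> nat) set \<Rightarrow> bool" where
  "class3 k P \<longleftrightarrow> (\<exists>X a b c r j. class2_split k X a b c \<and>
     (r, j) \<in> X \<and> a \<le> r \<and> r < b \<and> j < c \<and>
     (\<forall>(r', j') \<in> X. a \<le> r' \<and> r' < b \<and> j' < c \<longrightarrow> j' \<le> j) \<and>
     P = move_row_top r X)"

definition class4 :: "nat \<Rightarrow> (nat \<times> nat) set \<Rightarrow> bool" where
  "class4 k P \<longleftrightarrow> perm_mat k P \<and> (\<exists>a b c d.
     0 < a \<and> a < b \<and> b < k \<and> 0 < c \<and> c < d \<and> d < k \<and>
     P \<inter> ({0..<a} \<times> {c..<d}) \<noteq> {} \<and>
     P \<inter> ({a..<b} \<times> {0..<c}) \<noteq> {} \<and>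
     P \<inter> ({a..<b} \<times> {d..<k}) \<noteq> {} \<and>
     P \<inter> ({b..<k} \<times> {c..<d}) \<noteq> {} \<and>
     P \<subseteq> ({0..<a} \<times> {c..<d}) \<union> ({a..<b} \<times> {0..<c}) \<union> ({a..<b} \<times> {d..<k})
          \<union> ({b..<k} \<times> {c..<d}))"

definition reduces_to :: "nat \<Rightarrow> (nat \<times> nat) set \<Rightarrow> (nat \<Rightarrow> (nat \<times> nat) set \<Rightarrow> bool) \<Rightarrow> bool" where
  "reduces_to k P C \<longleftrightarrow> (\<exists>Q. sym_reach k P Q \<and> C k Q)"

definition ordinary :: "nat \<Rightarrow> (nat \<times> nat) set \<Rightarrow> bool" where
  "ordinary k P \<longleftrightarrow> perm_mat k P \<and>
     \<not> reduces_to k P class1 \<and> \<not> reduces_to k P class2 \<and>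
     \<not> reduces_to k P class3 \<and> \<not> reduces_to k P class4"

end

theory Submission
  imports Defs "HOL-Combinatorics.Permutations"
begin

(* If P reduces to one of the four classes, then an image Q of P under one of the eight
   symmetries of the square has all its ones in a set B of columns lying in a set A of rows:
   for classes 1-3, B is an initial segment of columns and card A <= card B + 2; for class 4,
   B is a column interval of length k - m and A the complement of a row interval of length m.
   If Q is the graph of the permutation s, this says that the preimage of B under s lies in A.
   The number of permutations with a given preimage C of B depends only on card C, so exactly
   (card A choose card B) * (card B)! * (k - card B)! <= (card A)! * (k - card B)! permutations
   satisfy it.  Since x! * y! <= m! * (x + y - m)! for m <= x, y, summing this bound over the
   admissible A and B gives O((k - 1)!) = o(k!) matrices that are not ordinary. *)

section \<open>Permutations with a prescribed preimage\<close>

lemma permutes_exists_image_eq: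
  assumes "finite U" "C \<subseteq> U" "D \<subseteq> U" "card C = card D"
  obtains t where "t permutes U" "t ` C = D"
proof -
  have "finite C" "finite D" using assms finite_subset by auto
  then obtain f where f: "bij_betw f C D" using finite_same_card_bij assms(4) by blast
  have "card (U - C) = card (U - D)" using assms by (simp add: card_Diff_subset finite_subset)
  then obtain g where g: "bij_betw g (U - C) (U - D)" using finite_same_card_bij assms(1) by blast
  define t where "t x = (if x \<in> C then f x else if x \<in> U then g x else x)" for x
  have tC: "bij_betw t C D" using f by (rule bij_betw_cong[THEN iffD1, rotated]) (simp add: t_def)
  have "bij_betw t (U - C) (U - D)" using g by (rule bij_betw_cong[THEN iffD1, rotated]) (simp add: t_def)
  with tC have "bij_betw t (C \<union> (U - C)) (D \<union> (U - D))" by (rule bij_betw_combine) blast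
  moreover have "C \<union> (U - C) = U" "D \<union> (U - D) = U" using assms(2,3) by auto
  ultimately have "bij_betw t U U" by simp
  then have "t permutes U" by (rule bij_imp_permutes) (use assms(2) in \<open>auto simp: t_def\<close>)
  moreover have "t ` C = D" using tC bij_betw_imp_surj_on by blast
  ultimately show thesis by (rule that)
qed

lemma permutes_vimage_subset: "s permutes U \<Longrightarrow> B \<subseteq> U \<Longrightarrow> s -` B \<subseteq> U"
  using permutes_not_in by fastforce

lemma card_permutes_vimage: "s permutes U \<Longrightarrow> card (s -` B) = card B"
  by (simp add: card_vimage_inj permutes_inj permutes_surj)

lemma card_permutes_vimage_eq_le:
  assumes "finite U" "C \<subseteq> U" "D \<subseteq> U" "card C = card D"
  shows "card {s. s permutes U \<and> s -` B = C} \<le> card {s. s permutes U \<and> s -` B = D}"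
proof -
  obtain t where t: "t permutes U" "t ` D = C"
    using permutes_exists_image_eq[OF assms(1,3,2) assms(4)[symmetric]] .
  have "inj_on (\<lambda>s. s \<circ> t) {s. s permutes U \<and> s -` B = C}"
  proof (rule inj_onI)
    fix s s' assume "s \<circ> t = s' \<circ> t"
    then have "s \<circ> (t \<circ> inv t) = s' \<circ> (t \<circ> inv t)" by (simp add: o_assoc)
    then show "s = s'" by (simp add: permutes_inv_o(1)[OF t(1)])
  qed
  moreover have "(\<lambda>s. s \<circ> t) ` {s. s permutes U \<and> s -` B = C} \<subseteq> {s. s permutes U \<and> s -` B = D}"
  proof clarify
    fix s assume "s permutes U" "C = s -` B"
    moreover have "t -` (t ` D) = D" using permutes_inj[OF t(1)] by (rule inj_vimage_image_eq)
    ultimately show "s \<circ> t permutes U \<and> (s \<circ> t) -` B = D"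
      using t by (simp add: permutes_compose vimage_comp)
  qed
  moreover have "finite {s. s permutes U \<and> s -` B = D}"
    using finite_permutations[OF assms(1)] by (rule rev_finite_subset) blast
  ultimately show ?thesis by (intro card_inj_on_le)
qed

lemma card_permutes_vimage_eq_cong:
  assumes "finite U" "C \<subseteq> U" "D \<subseteq> U" "card C = card D"
  shows "card {s. s permutes U \<and> s -` B = C} = card {s. s permutes U \<and> s -` B = D}"
  using card_permutes_vimage_eq_le[OF assms] card_permutes_vimage_eq_le[OF assms(1,3,2) assms(4)[symmetric]]
  by (rule antisym)

lemma card_permutes_vimage_subset_choose:
  assumes "finite U" "A \<subseteq> U" "B \<subseteq> U"
  shows "card {s. s permutes U \<and> s -` B \<subseteq> A}
    = (card A choose card B) * card {s. s permutes U \<and> s -` B = B}"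
proof -
  let ?F = "{C. C \<subseteq> A \<and> card C = card B}"
  let ?X = "\<lambda>C. {s. s permutes U \<and> s -` B = C}"
  have "{s. s permutes U \<and> s -` B \<subseteq> A} = (\<Union>C\<in>?F. ?X C)"
    using card_permutes_vimage by blast
  then have "card {s. s permutes U \<and> s -` B \<subseteq> A} = card (\<Union>C\<in>?F. ?X C)"
    by (rule arg_cong)
  also have "\<dots> = (\<Sum>C\<in>?F. card (?X C))"
  proof (rule card_UN_disjoint)
    show "finite ?F" using finite_subset[OF assms(2,1)] by simp
    show "\<forall>C\<in>?F. finite (?X C)"
      using finite_permutations[OF assms(1)] by (blast intro: rev_finite_subset)
  qed blast
  also have "\<dots> = (\<Sum>C\<in>?F. card (?X B))"
    using assms by (intro sum.cong card_permutes_vimage_eq_cong) auto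
  also have "\<dots> = (card A choose card B) * card (?X B)"
    using n_subsets[OF finite_subset[OF assms(2,1)]] by simp
  finally show ?thesis .
qed

lemma card_permutes_vimage_subset:
  assumes "finite U" "A \<subseteq> U" "B \<subseteq> U"
  shows "card {s. s permutes U \<and> s -` B \<subseteq> A}
    = (card A choose card B) * fact (card B) * fact (card U - card B)"
proof -
  have le: "card B \<le> card U" using assms by (simp add: card_mono)
  have "(card U choose card B) * card {s. s permutes U \<and> s -` B = B}
      = card {s. s permutes U \<and> s -` B \<subseteq> U}"
    using card_permutes_vimage_subset_choose[OF assms(1) order_refl assms(3)] by simp
  also have "\<dots> = fact (card U)"
  proof -
    have "{s. s permutes U \<and> s -` B \<subseteq> U} = {s. s permutes U}"
      using assms(3) permutes_vimage_subset by blast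
    then show ?thesis using card_permutations[OF HOL.refl assms(1)] by simp
  qed
  also have "\<dots> = (card U choose card B) * (fact (card B) * fact (card U - card B))"
    using binomial_fact_lemma[OF le] by (simp add: algebra_simps)
  finally have "card {s. s permutes U \<and> s -` B = B} = fact (card B) * fact (card U - card B)"
    using le by simp
  then show ?thesis
    using card_permutes_vimage_subset_choose[OF assms] by simp
qed

lemma binomial_mult_fact_le: "(n choose c) * fact c \<le> (fact n :: nat)"
proof (cases "c \<le> n")
  case True
  then have "(n choose c) * fact c * fact (n - c) = fact n"
    using binomial_fact_lemma[OF True] by (simp add: ac_simps)
  moreover have "(n choose c) * fact c * 1 \<le> (n choose c) * fact c * fact (n - c)"
    by (intro mult_le_mono2 fact_ge_1)
  ultimately show ?thesis by simp
qed (simp add: binomial_eq_0)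

lemma card_permutes_vimage_subset_le:
  assumes "finite U" "A \<subseteq> U" "B \<subseteq> U"
  shows "card {s. s permutes U \<and> s -` B \<subseteq> A} \<le> fact (card A) * fact (card U - card B)"
  unfolding card_permutes_vimage_subset[OF assms]
  using binomial_mult_fact_le by (intro mult_le_mono1)

definition perm_graph :: "nat \<Rightarrow> (nat \<Rightarrow> nat) \<Rightarrow> (nat \<times> nat) set" where
  "perm_graph k s = (\<lambda>i. (i, s i)) ` {..<k}"

lemma mem_perm_graph: "(i, j) \<in> perm_graph k s \<longleftrightarrow> i < k \<and> j = s i"
  unfolding perm_graph_def by auto

lemma perm_mat_perm_graph: "s permutes {..<k} \<Longrightarrow> perm_mat k (perm_graph k s)"
proof -
  assume s: "s permutes {..<k}"
  have "\<exists>!i. i < k \<and> j = s i" if "j < k" for j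
  proof
    show "inv s j < k \<and> j = s (inv s j)"
      using s that permutes_in_image[OF permutes_inv[OF s]] by (simp add: permutes_inverses(1))
  next
    fix i assume "i < k \<and> j = s i"
    then show "i = inv s j" using s by (simp add: permutes_inverses(2))
  qed
  then show ?thesis
    using s permutes_in_image[OF s] unfolding perm_mat_def by (auto simp: mem_perm_graph)
qed

lemma perm_mat_memD: "perm_mat k P \<Longrightarrow> (i, j) \<in> P \<Longrightarrow> i < k \<and> j < k"
  unfolding perm_mat_def by blast

lemma perm_mat_finite: "perm_mat k P \<Longrightarrow> finite P"
  unfolding perm_mat_def by (meson finite_SigmaI finite_lessThan finite_subset)

lemma perm_mat_row_unique: "perm_mat k P \<Longrightarrow> (i, j) \<in> P \<Longrightarrow> (i, j') \<in> P \<Longrightarrow> j = j'"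
  unfolding perm_mat_def by blast

lemma perm_mat_col_unique: "perm_mat k P \<Longrightarrow> (i, j) \<in> P \<Longrightarrow> (i', j) \<in> P \<Longrightarrow> i = i'"
  unfolding perm_mat_def by blast

lemma perm_mat_row_ex: "perm_mat k P \<Longrightarrow> i < k \<Longrightarrow> \<exists>j. (i, j) \<in> P"
  unfolding perm_mat_def by blast

lemma perm_mat_col_ex: "perm_mat k P \<Longrightarrow> j < k \<Longrightarrow> \<exists>i. (i, j) \<in> P"
  unfolding perm_mat_def by blast

lemma perm_mat_obtains_perm_graph:
  assumes P: "perm_mat k P"
  obtains s where "s permutes {..<k}" "P = perm_graph k s"
proof -
  define s where "s i = (if i < k then THE j. (i, j) \<in> P else i)" for i
  have mem: "(i, j) \<in> P \<longleftrightarrow> i < k \<and> j = s i" for i j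
  proof
    assume ij: "(i, j) \<in> P"
    then have "i < k" using perm_mat_memD[OF P] by blast
    moreover have "(THE j'. (i, j') \<in> P) = j"
      by (rule the_equality[where P = "\<lambda>j'. (i, j') \<in> P", OF ij perm_mat_row_unique[OF P _ ij]])
    ultimately show "i < k \<and> j = s i" by (simp add: s_def)
  next
    assume "i < k \<and> j = s i"
    then show "(i, j) \<in> P"
      unfolding s_def using perm_mat_row_ex[OF P] perm_mat_row_unique[OF P] by (metis theI)
  qed
  have "inj_on s {..<k}"
    using perm_mat_col_unique[OF P] mem by (intro inj_onI) auto
  moreover have "s ` {..<k} \<subseteq> {..<k}" using perm_mat_memD[OF P] mem by blast
  ultimately have "bij_betw s {..<k} {..<k}" by (simp add: bij_betw_def endo_inj_surj)
  then have "s permutes {..<k}" by (rule bij_imp_permutes) (simp add: s_def)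
  moreover have "P = perm_graph k s" using mem by (auto simp: mem_perm_graph)
  ultimately show thesis by (rule that)
qed

lemma perm_mat_eq_perm_graph_image: "{P. perm_mat k P} = perm_graph k ` {s. s permutes {..<k}}"
  using perm_mat_perm_graph perm_mat_obtains_perm_graph by blast

lemma inj_on_perm_graph: "inj_on (perm_graph k) {s. s permutes {..<k}}"
proof (rule inj_onI)
  fix s t assume st: "s \<in> {s. s permutes {..<k}}" "t \<in> {s. s permutes {..<k}}"
    and eq: "perm_graph k s = perm_graph k t"
  show "s = t"
  proof
    fix i show "s i = t i"
    proof (cases "i < k")
      case True
      then have "(i, s i) \<in> perm_graph k s" by (simp add: mem_perm_graph)
      then have "(i, s i) \<in> perm_graph k t" by (simp only: eq)
      then show ?thesis by (simp add: mem_perm_graph)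
    next
      case False
      then show ?thesis using st by (simp add: permutes_not_in)
    qed
  qed
qed

lemma card_perm_mat: "card {P. perm_mat k P} = fact k"
  by (simp add: perm_mat_eq_perm_graph_image card_image[OF inj_on_perm_graph] card_permutations)

lemma finite_perm_mat: "finite {P. perm_mat k P}"
  by (simp add: perm_mat_eq_perm_graph_image finite_permutations)

lemma perm_mat_permute_rows:
  assumes "\<rho> permutes {..<k}" "perm_mat k P"
  shows "perm_mat k ((\<lambda>(i, j). (\<rho> i, j)) ` P)"
proof -
  obtain s where s: "s permutes {..<k}" "P = perm_graph k s"
    using perm_mat_obtains_perm_graph[OF assms(2)] .
  have "(\<lambda>(i, j). (\<rho> i, j)) ` perm_graph k s = perm_graph k (s \<circ> inv \<rho>)"
    unfolding perm_graph_def image_image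
    using permutes_in_image[OF assms(1)] permutes_in_image[OF permutes_inv[OF assms(1)]]
    by (auto simp: permutes_inverses[OF assms(1)] image_iff intro!: bexI[where x = "inv \<rho> _"])
  then show ?thesis
    using s perm_mat_perm_graph permutes_compose permutes_inv assms(1) by metis
qed

lemma card_perm_mat_block_le_cols:
  assumes "perm_mat k P" "finite Y"
  shows "card (P \<inter> (X \<times> Y)) \<le> card Y"
proof -
  have "inj_on snd (P \<inter> (X \<times> Y))"
    using perm_mat_col_unique[OF assms(1)] by (intro inj_onI) auto
  then show ?thesis using assms(2) by (intro card_inj_on_le) auto
qed

lemma card_cols_le_card_rows:
  assumes "perm_mat k P" "B \<subseteq> {..<k}" "\<forall>(i, j)\<in>P. j \<in> B \<longrightarrow> i \<in> A" "finite A"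
  shows "card B \<le> card A"
  using assms(4)
proof (rule card_le_if_inj_on_rel[where r = "\<lambda>j i. (i, j) \<in> P"])
  show "\<exists>i. i \<in> A \<and> (i, j) \<in> P" if "j \<in> B" for j
    using perm_mat_col_ex[OF assms(1)] assms(2,3) that by blast
qed (use perm_mat_row_unique[OF assms(1)] in blast)

lemma card_rows_le_card_cols_add:
  assumes "perm_mat k P" "R \<subseteq> {..<k}" "\<forall>(i, j)\<in>P. i \<in> R \<longrightarrow> j \<in> Y \<or> (i, j) \<in> Z" "finite Y"
  shows "card R \<le> card Y + card (P \<inter> Z)"
proof -
  have fP: "finite P" using perm_mat_finite[OF assms(1)] .
  have "R \<subseteq> fst ` (P \<inter> (UNIV \<times> Y)) \<union> fst ` (P \<inter> Z)"
  proof
    fix i assume i: "i \<in> R"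
    then obtain j where j: "(i, j) \<in> P" using perm_mat_row_ex[OF assms(1)] assms(2) by blast
    then have "j \<in> Y \<or> (i, j) \<in> Z" using assms(3) i by auto
    then show "i \<in> fst ` (P \<inter> (UNIV \<times> Y)) \<union> fst ` (P \<inter> Z)" using j by force
  qed
  then have "card R \<le> card (fst ` (P \<inter> (UNIV \<times> Y)) \<union> fst ` (P \<inter> Z))"
    using fP by (simp add: card_mono)
  also have "\<dots> \<le> card (fst ` (P \<inter> (UNIV \<times> Y))) + card (fst ` (P \<inter> Z))" by (rule card_Un_le)
  also have "\<dots> \<le> card (P \<inter> (UNIV \<times> Y)) + card (P \<inter> Z)"
    using fP by (intro add_mono card_image_le) auto
  also have "\<dots> \<le> card Y + card (P \<inter> Z)"
    using card_perm_mat_block_le_cols[OF assms(1,4)] by simp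
  finally show ?thesis .
qed

definition confined_perm_mats :: "nat \<Rightarrow> nat set \<Rightarrow> nat set \<Rightarrow> (nat \<times> nat) set set" where
  "confined_perm_mats k A B = {P. perm_mat k P \<and> (\<forall>(i, j)\<in>P. j \<in> B \<longrightarrow> i \<in> A)}"

lemma card_confined_perm_mats_le:
  assumes "A \<subseteq> {..<k}" "B \<subseteq> {..<k}"
  shows "card (confined_perm_mats k A B) \<le> fact (card A) * fact (k - card B)"
proof -
  let ?S = "{s. s permutes {..<k} \<and> s -` B \<subseteq> A}"
  have "confined_perm_mats k A B \<subseteq> perm_graph k ` ?S"
  proof
    fix P assume "P \<in> confined_perm_mats k A B"
    then have P: "perm_mat k P" "\<forall>(i, j)\<in>P. j \<in> B \<longrightarrow> i \<in> A"
      unfolding confined_perm_mats_def by auto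
    obtain s where s: "s permutes {..<k}" "P = perm_graph k s"
      using perm_mat_obtains_perm_graph[OF P(1)] .
    have "i \<in> A" if "s i \<in> B" for i
    proof -
      have "i < k" using permutes_vimage_subset[OF s(1) assms(2)] that by blast
      then show ?thesis using P(2) that by (auto simp: s(2) mem_perm_graph)
    qed
    with s show "P \<in> perm_graph k ` ?S" by blast
  qed
  moreover have "finite ?S" by (rule rev_finite_subset[OF finite_permutations[of "{..<k}"]]) auto
  ultimately have "card (confined_perm_mats k A B) \<le> card ?S"
    by (meson card_image_le card_mono finite_imageI le_trans)
  also have "\<dots> \<le> fact (card A) * fact (k - card B)"
    using card_permutes_vimage_subset_le[OF _ assms] by simp
  finally show ?thesis .
qed

section \<open>Symmetries of the square\<close>

definition dihedral_map :: "nat \<Rightarrow> bool \<Rightarrow> bool \<Rightarrow> bool \<Rightarrow> nat \<times> nat \<Rightarrow> nat \<times> nat" where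
  "dihedral_map k t h v = (\<lambda>(i, j).
     (if h then k - 1 - (if t then j else i) else (if t then j else i),
      if v then k - 1 - (if t then i else j) else (if t then i else j)))"

lemma inj_on_dihedral_map: "inj_on (dihedral_map k t h v) ({..<k} \<times> {..<k})"
  by (rule inj_onI) (auto simp: dihedral_map_def split: if_splits)

lemma sym_reach_dihedral_map:
  assumes "sym_reach k P Q" "P \<subseteq> {..<k} \<times> {..<k}"
  shows "\<exists>t h v. Q = dihedral_map k t h v ` P"
  using assms(1)
proof induction
  case refl
  have "dihedral_map k False False False ` P = P"
    using assms(2) by (force simp: dihedral_map_def intro: image_eqI)
  then show ?case by metis
next
  case (vstep Q)
  then obtain t h v where Q: "Q = dihedral_map k t h v ` P" by blast
  have "vrefl k Q = dihedral_map k t h (\<not> v) ` P"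
    unfolding vrefl_def Q image_image using assms(2)
    by (intro image_cong) (auto simp: dihedral_map_def)
  then show ?case by blast
next
  case (hstep Q)
  then obtain t h v where Q: "Q = dihedral_map k t h v ` P" by blast
  have "hrefl k Q = dihedral_map k t (\<not> h) v ` P"
    unfolding hrefl_def Q image_image using assms(2)
    by (intro image_cong) (auto simp: dihedral_map_def)
  then show ?case by blast
next
  case (rstep Q)
  then obtain t h v where Q: "Q = dihedral_map k t h v ` P" by blast
  have "rot90 k Q = dihedral_map k (\<not> t) v (\<not> h) ` P"
    unfolding rot90_def Q image_image using assms(2)
    by (intro image_cong) (auto simp: dihedral_map_def)
  then show ?case by blast
qed

lemma card_not_ordinary_le_eight_card:
  assumes "finite S" and S: "\<And>Q. class1 k Q \<or> class2 k Q \<or> class3 k Q \<or> class4 k Q \<Longrightarrow> Q \<in> S"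
  shows "card {P. perm_mat k P \<and> \<not> ordinary k P} \<le> 8 * card S"
proof -
  let ?sq = "{..<k} \<times> {..<k}"
  let ?T = "\<lambda>(t, h, v). {P. P \<subseteq> ?sq \<and> dihedral_map k t h v ` P \<in> S}"
  have card_T: "card (?T x) \<le> card S" for x
  proof (cases x)
    case (fields t h v)
    have "inj_on (image (dihedral_map k t h v)) (Pow ?sq)"
      using inj_on_dihedral_map inj_on_image_Pow by blast
    then have "inj_on (image (dihedral_map k t h v)) (?T x)"
      by (rule inj_on_subset) (auto simp: fields)
    then show ?thesis using \<open>finite S\<close> by (intro card_inj_on_le) (auto simp: fields)
  qed
  have "{P. perm_mat k P \<and> \<not> ordinary k P} \<subseteq> (\<Union>x. ?T x)"
  proof clarify
    fix P assume P: "perm_mat k P" "\<not> ordinary k P"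
    then obtain Q where Q: "sym_reach k P Q" "class1 k Q \<or> class2 k Q \<or> class3 k Q \<or> class4 k Q"
      unfolding ordinary_def reduces_to_def by blast
    have sq: "P \<subseteq> ?sq" using P(1) unfolding perm_mat_def by blast
    obtain t h v where "Q = dihedral_map k t h v ` P" using sym_reach_dihedral_map[OF Q(1) sq] by blast
    then have "P \<in> ?T (t, h, v)" using sq S[OF Q(2)] by auto
    then show "P \<in> (\<Union>x. ?T x)" by blast
  qed
  then have "card {P. perm_mat k P \<and> \<not> ordinary k P} \<le> card (\<Union>x. ?T x)"
    by (intro card_mono) (auto intro: finite_subset[of _ "Pow ?sq"])
  also have "\<dots> \<le> (\<Sum>x\<in>UNIV. card (?T x))" by (rule card_UN_le) simp
  also have "\<dots> \<le> (\<Sum>x\<in>(UNIV :: (bool \<times> bool \<times> bool) set). card S)"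
    by (intro sum_mono card_T)
  also have "\<dots> = 8 * card S" by (simp add: UNIV_Times_UNIV[symmetric] del: UNIV_Times_UNIV)
  finally show ?thesis .
qed

section \<open>Confining the four classes\<close>

lemma class1_confined:
  assumes "class1 k Q"
  shows "\<exists>d\<in>{..<3}. \<exists>b\<in>{1..k-1-d}. Q \<in> confined_perm_mats k {0..<b+d} {0..<b}"
proof -
  obtain a b where Q: "perm_mat k Q" "0 < a" "a < k" "0 < b" "b < k"
    "Q \<subseteq> ({0..<a} \<times> {0..<b}) \<union> ({a..<k} \<times> {b..<k}) \<union> ({0..<a} \<times> {b..<k})"
    "few_adjacent Q ({0..<a} \<times> {b..<k})"
    using assms unfolding class1_def by blast
  have confined: "\<forall>(i, j)\<in>Q. j \<in> {0..<b} \<longrightarrow> i \<in> {0..<a}" using Q(6) by auto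
  have "card {0..<b} \<le> card {0..<a}"
    using Q by (intro card_cols_le_card_rows[OF Q(1) _ confined]) auto
  moreover have "card {0..<a} \<le> card {0..<b} + card (Q \<inter> ({0..<a} \<times> {b..<k}))"
    using Q(3,6) by (intro card_rows_le_card_cols_add[OF Q(1)]) auto
  moreover have "card (Q \<inter> ({0..<a} \<times> {b..<k})) \<le> 2"
    using Q(7) unfolding few_adjacent_def by blast
  ultimately have "b \<le> a" "a \<le> b + 2" by simp_all
  then have "a - b \<in> {..<3}" "b \<in> {1..k-1-(a-b)}" "Q \<in> confined_perm_mats k {0..<b+(a-b)} {0..<b}"
    using Q confined by (auto simp: confined_perm_mats_def)
  then show ?thesis by blast
qed

lemma class2_split_bounds:
  assumes "class2_split k Q a b c"
  shows "\<forall>(i, j)\<in>Q. j \<in> {0..<c} \<longrightarrow> i \<in> {a..<b}" "c \<le> b - a" "b - a \<le> c + 2" "2 \<le> c"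
proof -
  have Q: "perm_mat k Q" "a < b" "b < k" "c < k"
     "card (Q \<inter> ({a..<b} \<times> {0..<c})) \<ge> 2"
     "Q \<subseteq> ({0..<a} \<times> {c..<k}) \<union> ({b..<k} \<times> {c..<k}) \<union> ({a..<b} \<times> {0..<c})
          \<union> ({a..<b} \<times> {c..<k})"
     "few_adjacent Q ({a..<b} \<times> {c..<k})"
    using assms unfolding class2_split_def by blast+
  show confined: "\<forall>(i, j)\<in>Q. j \<in> {0..<c} \<longrightarrow> i \<in> {a..<b}" using Q(6) by auto
  have "card {0..<c} \<le> card {a..<b}"
    using Q by (intro card_cols_le_card_rows[OF Q(1) _ confined]) auto
  then show "c \<le> b - a" by simp
  have "card {a..<b} \<le> card {0..<c} + card (Q \<inter> ({a..<b} \<times> {c..<k}))"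
    using Q(3,6) by (intro card_rows_le_card_cols_add[OF Q(1)]) auto
  moreover have "card (Q \<inter> ({a..<b} \<times> {c..<k})) \<le> 2"
    using Q(7) unfolding few_adjacent_def by blast
  ultimately show "b - a \<le> c + 2" by simp
  show "2 \<le> c" using Q(5) card_perm_mat_block_le_cols[OF Q(1), of "{0..<c}" "{a..<b}"] by simp
qed

lemma class2_confined:
  assumes "class2 k Q"
  shows "\<exists>d\<in>{..<3}. \<exists>c\<in>{2..k-2-d}. \<exists>a\<in>{1..k-1-c-d}. Q \<in> confined_perm_mats k {a..<a+c+d} {0..<c}"
proof -
  obtain a b c where split: "class2_split k Q a b c" using assms class2_def by blast
  then have "perm_mat k Q" "0 < a" "b < k" unfolding class2_split_def by simp_all
  with class2_split_bounds[OF split] have "b - a - c \<in> {..<3}" "c \<in> {2..k-2-(b-a-c)}"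
    "a \<in> {1..k-1-c-(b-a-c)}" "Q \<in> confined_perm_mats k {a..<a+c+(b-a-c)} {0..<c}"
    by (auto simp: confined_perm_mats_def)
  then show ?thesis by blast
qed

lemma class3_confined:
  assumes "class3 k P"
  shows "\<exists>d\<in>{..<3}. \<exists>c\<in>{2..k-2-d}. \<exists>a\<in>{1..k-1-c-d}.
    P \<in> confined_perm_mats k (insert 0 {a+1..<a+c+d}) {0..<c}"
proof -
  obtain X a b c r where X: "class2_split k X a b c" "a \<le> r" "r < b" "P = move_row_top r X"
    using assms unfolding class3_def by blast
  then have "perm_mat k X" "0 < a" "b < k" unfolding class2_split_def by simp_all
  note bounds = this class2_split_bounds[OF X(1)]
  define \<rho> where "\<rho> i = (if i = r then 0 else if i < r then i + 1 else i)" for i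
  have P: "P = (\<lambda>(i, j). (\<rho> i, j)) ` X"
    unfolding X(4) move_row_top_def \<rho>_def by (rule image_cong) auto
  have "inj_on \<rho> {..<k}" by (rule inj_onI) (auto simp: \<rho>_def split: if_splits)
  moreover have "\<rho> ` {..<k} \<subseteq> {..<k}" using X(3) bounds by (auto simp: \<rho>_def)
  ultimately have "bij_betw \<rho> {..<k} {..<k}" by (simp add: bij_betw_def endo_inj_surj)
  then have "\<rho> permutes {..<k}" by (rule bij_imp_permutes) (use X(3) bounds in \<open>auto simp: \<rho>_def\<close>)
  then have "perm_mat k P" unfolding P using bounds(1) by (rule perm_mat_permute_rows)
  moreover have "\<forall>(i, j)\<in>P. j \<in> {0..<c} \<longrightarrow> i \<in> insert 0 {a+1..<b}"
    using bounds(4) X(2,3) by (auto simp: P \<rho>_def)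
  ultimately have "b - a - c \<in> {..<3}" "c \<in> {2..k-2-(b-a-c)}" "a \<in> {1..k-1-c-(b-a-c)}"
    "P \<in> confined_perm_mats k (insert 0 {a+1..<a+c+(b-a-c)}) {0..<c}"
    using bounds by (auto simp: confined_perm_mats_def)
  then show ?thesis by blast
qed

lemma class4_confined:
  assumes "class4 k Q"
  shows "\<exists>m\<in>{2..k-2}. \<exists>a\<in>{1..<k-m}. \<exists>c\<in>{1..<m}.
    Q \<in> confined_perm_mats k ({..<k} - {a..<a+m}) {c..<c+(k-m)}"
proof -
  obtain a b c d where Q: "perm_mat k Q" "0 < a" "a < b" "b < k" "0 < c" "c < d" "d < k"
     "Q \<subseteq> ({0..<a} \<times> {c..<d}) \<union> ({a..<b} \<times> {0..<c}) \<union> ({a..<b} \<times> {d..<k})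
          \<union> ({b..<k} \<times> {c..<d})"
    using assms unfolding class4_def by blast
  have confined: "\<forall>(i, j)\<in>Q. j \<in> {c..<d} \<longrightarrow> i \<in> {..<k} - {a..<b}"
    using Q(8) perm_mat_memD[OF Q(1)] by fastforce
  have "card {c..<d} \<le> card ({..<k} - {a..<b})"
    using Q by (intro card_cols_le_card_rows[OF Q(1) _ confined]) auto
  moreover have "card ({..<k} - {a..<b}) \<le> card {c..<d} + card (Q \<inter> {})"
    using Q(8) by (intro card_rows_le_card_cols_add[OF Q(1)]) auto
  moreover have "card ({..<k} - {a..<b}) = k - (b - a)" using Q by (subst card_Diff_subset) auto
  ultimately have "d - c = k - (b - a)" by simp
  then have "b - a \<in> {2..k-2}" "a \<in> {1..<k-(b-a)}" "c \<in> {1..<b-a}"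
    "Q \<in> confined_perm_mats k ({..<k} - {a..<a+(b-a)}) {c..<c+(k-(b-a))}"
    using Q confined by (auto simp: confined_perm_mats_def)
  then show ?thesis by blast
qed

section \<open>Factorial estimates\<close>

lemma fact_mult_fact_le:
  assumes "m \<le> x" "m \<le> y"
  shows "fact x * fact y \<le> fact m * (fact (x + y - m) :: nat)"
proof -
  have "fact (m + d) * fact y \<le> fact m * (fact (d + y) :: nat)" for d
  proof (induction d)
    case (Suc d)
    have "fact (m + Suc d) * fact y = Suc (m + d) * (fact (m + d) * fact y)"
      by (simp add: algebra_simps)
    also have "\<dots> \<le> Suc (d + y) * (fact m * fact (d + y))"
      by (rule mult_le_mono[OF _ Suc.IH]) (use assms(2) in simp)
    also have "\<dots> = fact m * fact (Suc d + y)" by (simp add: algebra_simps)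
    finally show ?case .
  qed simp
  from this[of "x - m"] show ?thesis using assms by simp
qed

lemma sum_le_ends_inner:
  fixes f :: "nat \<Rightarrow> nat"
  assumes "\<And>b. b \<in> {l..h} \<Longrightarrow> f b \<le> M1" "\<And>b. b \<in> {l<..<h} \<Longrightarrow> f b \<le> M2"
  shows "sum f {l..h} \<le> 2 * M1 + h * M2"
proof (cases "l \<le> h")
  case True
  have "{l..h} = {l, h} \<union> {l<..<h}" using True by auto
  then have "sum f {l..h} = sum f {l, h} + sum f {l<..<h}"
    by (simp only:) (rule sum.union_disjoint; auto)
  also have "sum f {l, h} \<le> 2 * M1"
    using assms(1)[of l] assms(1)[of h] True by (cases "l = h") auto
  also have "sum f {l<..<h} \<le> card {l<..<h} * M2"
    using sum_bounded_above[of "{l<..<h}" f M2] assms(2) by simp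
  also have "\<dots> \<le> h * M2" by (intro mult_le_mono1) simp
  finally show ?thesis by simp
qed simp

lemma mult_fact_diff_two_le: "2 \<le> k \<Longrightarrow> k * fact (k - 2) \<le> 2 * (fact (k - 1) :: nat)"
proof -
  assume "2 \<le> k"
  then obtain j where k: "k = j + 2" by (metis add.commute le_iff_add)
  have "(j + 2) * fact j \<le> 2 * (j + 1) * (fact j :: nat)" by (intro mult_le_mono1) simp
  also have "\<dots> = 2 * fact (j + 1)" by (simp add: algebra_simps)
  finally show ?thesis by (simp add: k)
qed

lemma mult_mult_fact_diff_three_le: "3 \<le> k \<Longrightarrow> k * k * fact (k - 3) \<le> 9 * (fact (k - 1) :: nat)"
proof -
  assume "3 \<le> k"
  then obtain j where k: "k = j + 3" by (metis add.commute le_iff_add)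
  have "(j + 3) * (j + 3) * fact j \<le> 9 * ((j + 2) * (j + 1)) * (fact j :: nat)"
    by (intro mult_le_mono1) (simp add: algebra_simps)
  also have "\<dots> = 9 * fact (j + 2)" by (simp add: fact_reduce algebra_simps)
  finally show ?thesis by (simp add: k)
qed

lemma sum_fact_add_mult_fact_diff_le:
  assumes "4 \<le> k" "d \<le> 2"
  shows "(\<Sum>b\<in>{1..k-1-d}. fact (b + d) * fact (k - b)) \<le> 60 * (fact (k - 1) :: nat)"
proof -
  have "(\<Sum>b\<in>{1..k-1-d}. fact (b + d) * fact (k - b))
      \<le> 2 * (6 * fact (k - 1)) + (k - 1 - d) * (24 * fact (k - 2))"
  proof (rule sum_le_ends_inner)
    fix b assume b: "b \<in> {1..k-1-d}"
    have "fact (b + d) * fact (k - b) \<le> fact (1 + d) * (fact (b + d + (k - b) - (1 + d)) :: nat)"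
      using b by (intro fact_mult_fact_le) auto
    also have "b + d + (k - b) - (1 + d) = k - 1" using b by auto
    also have "fact (1 + d) * fact (k - 1) \<le> fact 3 * (fact (k - 1) :: nat)"
      using assms(2) by (intro mult_le_mono1 fact_mono) simp
    finally show "fact (b + d) * fact (k - b) \<le> 6 * (fact (k - 1) :: nat)" by (simp add: fact_numeral)
  next
    fix b assume b: "b \<in> {1<..<k-1-d}"
    have "fact (b + d) * fact (k - b) \<le> fact (2 + d) * (fact (b + d + (k - b) - (2 + d)) :: nat)"
      using b by (intro fact_mult_fact_le) auto
    also have "b + d + (k - b) - (2 + d) = k - 2" using b by auto
    also have "fact (2 + d) * fact (k - 2) \<le> fact 4 * (fact (k - 2) :: nat)"
      using assms(2) by (intro mult_le_mono1 fact_mono) simp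
    finally show "fact (b + d) * fact (k - b) \<le> 24 * (fact (k - 2) :: nat)" by (simp add: fact_numeral)
  qed
  also have "\<dots> \<le> 12 * fact (k - 1) + 24 * (k * fact (k - 2))"
    using mult_le_mono1[of "k - 1 - d" k "24 * fact (k - 2)"] by simp
  also have "\<dots> \<le> 12 * fact (k - 1) + 24 * (2 * fact (k - 1))"
    using mult_fact_diff_two_le[of k] assms(1) by simp
  finally show ?thesis by simp
qed

lemma sum_mult_fact_add_mult_fact_diff_le:
  assumes "4 \<le> k" "d \<le> 2"
  shows "(\<Sum>c\<in>{2..k-2-d}. k * (fact (c + d) * fact (k - c))) \<le> 1176 * (fact (k - 1) :: nat)"
proof -
  have "(\<Sum>c\<in>{2..k-2-d}. k * (fact (c + d) * fact (k - c)))
      \<le> 2 * (k * (24 * fact (k - 2))) + (k - 2 - d) * (k * (120 * fact (k - 3)))"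
  proof (rule sum_le_ends_inner)
    fix c assume c: "c \<in> {2..k-2-d}"
    have "fact (c + d) * fact (k - c) \<le> fact (2 + d) * (fact (c + d + (k - c) - (2 + d)) :: nat)"
      using c by (intro fact_mult_fact_le) auto
    also have "c + d + (k - c) - (2 + d) = k - 2" using c by auto
    also have "fact (2 + d) * fact (k - 2) \<le> fact 4 * (fact (k - 2) :: nat)"
      using assms(2) by (intro mult_le_mono1 fact_mono) simp
    finally show "k * (fact (c + d) * fact (k - c)) \<le> k * (24 * (fact (k - 2) :: nat))"
      by (simp add: fact_numeral)
  next
    fix c assume c: "c \<in> {2<..<k-2-d}"
    have "fact (c + d) * fact (k - c) \<le> fact (3 + d) * (fact (c + d + (k - c) - (3 + d)) :: nat)"
      using c by (intro fact_mult_fact_le) auto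
    also have "c + d + (k - c) - (3 + d) = k - 3" using c by auto
    also have "fact (3 + d) * fact (k - 3) \<le> fact 5 * (fact (k - 3) :: nat)"
      using assms(2) by (intro mult_le_mono1 fact_mono) simp
    finally show "k * (fact (c + d) * fact (k - c)) \<le> k * (120 * (fact (k - 3) :: nat))"
      by (simp add: fact_numeral)
  qed
  also have "\<dots> \<le> 48 * (k * fact (k - 2)) + 120 * (k * k * fact (k - 3))"
    using mult_le_mono1[of "k - 2 - d" k "k * (120 * fact (k - 3))"] by (simp add: ac_simps)
  also have "\<dots> \<le> 48 * (2 * fact (k - 1)) + 120 * (9 * fact (k - 1))"
    using mult_fact_diff_two_le[of k] mult_mult_fact_diff_three_le[of k] assms(1) by simp
  finally show ?thesis by simp
qed

lemma sum_mult_fact_mult_fact_le: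
  assumes "4 \<le> k"
  shows "(\<Sum>m\<in>{2..k-2}. (k - m - 1) * (m - 1) * (fact (k - m) * fact m)) \<le> 60 * (fact (k - 1) :: nat)"
proof -
  have term_le: "(k - m - 1) * (m - 1) * (fact (k - m) * fact m) \<le> fact (m + 1) * fact (k - m + 1)" for m
  proof -
    have "(k - m - 1) * fact (k - m) \<le> (fact (k - m + 1) :: nat)"
      using mult_le_mono1[of "k - m - 1" "Suc (k - m)" "fact (k - m)"] by simp
    moreover have "(m - 1) * fact m \<le> (fact (m + 1) :: nat)"
      using mult_le_mono1[of "m - 1" "Suc m" "fact m"] by simp
    ultimately have "((k - m - 1) * fact (k - m)) * ((m - 1) * fact m) \<le> fact (k - m + 1) * fact (m + 1)"
      by (rule mult_le_mono)
    then show ?thesis by (simp only: ac_simps)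
  qed
  have "(\<Sum>m\<in>{2..k-2}. (k - m - 1) * (m - 1) * (fact (k - m) * fact m))
      \<le> 2 * (6 * fact (k - 1)) + (k - 2) * (24 * fact (k - 2))"
  proof (rule sum_le_ends_inner)
    fix m assume m: "m \<in> {2..k-2}"
    have "fact (m + 1) * fact (k - m + 1) \<le> fact 3 * (fact (m + 1 + (k - m + 1) - 3) :: nat)"
      using m by (intro fact_mult_fact_le) auto
    also have "m + 1 + (k - m + 1) - 3 = k - 1" using m by auto
    finally show "(k - m - 1) * (m - 1) * (fact (k - m) * fact m) \<le> 6 * (fact (k - 1) :: nat)"
      using term_le[of m] by (simp add: fact_numeral)
  next
    fix m assume m: "m \<in> {2<..<k-2}"
    have "fact (m + 1) * fact (k - m + 1) \<le> fact 4 * (fact (m + 1 + (k - m + 1) - 4) :: nat)"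
      using m by (intro fact_mult_fact_le) auto
    also have "m + 1 + (k - m + 1) - 4 = k - 2" using m by auto
    finally show "(k - m - 1) * (m - 1) * (fact (k - m) * fact m) \<le> 24 * (fact (k - 2) :: nat)"
      using term_le[of m] by (simp add: fact_numeral)
  qed
  also have "\<dots> \<le> 12 * fact (k - 1) + 24 * (k * fact (k - 2))"
    using mult_le_mono1[of "k - 2" k "24 * fact (k - 2)"] by simp
  also have "\<dots> \<le> 12 * fact (k - 1) + 24 * (2 * fact (k - 1))"
    using mult_fact_diff_two_le[of k] assms by simp
  finally show ?thesis by simp
qed

lemma fact_diff_one_smallo_fact: "(\<lambda>k. real (fact (k - 1))) \<in> o(\<lambda>k. real (fact k))"
proof (rule smalloI_tendsto)
  have "eventually (\<lambda>k. 1 / real k = real (fact (k - 1)) / real (fact k)) at_top"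
    using eventually_gt_at_top[of 0] by eventually_elim (simp add: fact_reduce)
  with lim_1_over_n show "(\<lambda>k. real (fact (k - 1)) / real (fact k)) \<longlonglongrightarrow> 0"
    by (rule Lim_transform_eventually)
qed auto

lemma card_UN_UN_le:
  assumes "finite I" "\<And>i. i \<in> I \<Longrightarrow> finite (J i)"
  shows "card (\<Union>i\<in>I. \<Union>j\<in>J i. F i j) \<le> (\<Sum>i\<in>I. \<Sum>j\<in>J i. card (F i j))"
  using assms by (intro order.trans[OF card_UN_le] sum_mono card_UN_le)

lemma card_class1_family_le:
  assumes "4 \<le> k"
  shows "card (\<Union>d\<in>{..<3}. \<Union>b\<in>{1..k-1-d}. confined_perm_mats k {0..<b+d} {0..<b})
    \<le> 180 * fact (k - 1)"
proof -
  have "card (\<Union>d\<in>{..<3}. \<Union>b\<in>{1..k-1-d}. confined_perm_mats k {0..<b+d} {0..<b})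
      \<le> (\<Sum>d\<in>{..<3}. \<Sum>b\<in>{1..k-1-d}. card (confined_perm_mats k {0..<b+d} {0..<b}))"
    by (rule card_UN_UN_le) simp_all
  also have "\<dots> \<le> (\<Sum>d\<in>{..<3}. \<Sum>b\<in>{1..k-1-d}. fact (b + d) * fact (k - b))"
  proof (intro sum_mono)
    fix d b assume "b \<in> {1..k-1-d}"
    then have "{0..<b+d} \<subseteq> {..<k}" "{0..<b} \<subseteq> {..<k}" by auto
    from card_confined_perm_mats_le[OF this]
    show "card (confined_perm_mats k {0..<b+d} {0..<b}) \<le> fact (b + d) * fact (k - b)" by simp
  qed
  also have "\<dots> \<le> (\<Sum>d\<in>{..<3::nat}. 60 * fact (k - 1))"
    using sum_fact_add_mult_fact_diff_le[OF assms] by (intro sum_mono) simp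
  finally show ?thesis by simp
qed

lemma card_class23_family_le:
  assumes "4 \<le> k"
    and A: "\<And>a c d. c \<in> {2..k-2-d} \<Longrightarrow> a \<in> {1..k-1-c-d} \<Longrightarrow> A a c d \<subseteq> {..<k} \<and> card (A a c d) \<le> c + d"
  shows "card (\<Union>d\<in>{..<3}. \<Union>c\<in>{2..k-2-d}. \<Union>a\<in>{1..k-1-c-d}. confined_perm_mats k (A a c d) {0..<c})
    \<le> 3528 * fact (k - 1)"
proof -
  have "card (\<Union>d\<in>{..<3}. \<Union>c\<in>{2..k-2-d}. \<Union>a\<in>{1..k-1-c-d}. confined_perm_mats k (A a c d) {0..<c})
      \<le> (\<Sum>d\<in>{..<3}. \<Sum>c\<in>{2..k-2-d}. card (\<Union>a\<in>{1..k-1-c-d}. confined_perm_mats k (A a c d) {0..<c}))"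
    by (rule card_UN_UN_le) simp_all
  also have "\<dots> \<le> (\<Sum>d\<in>{..<3}. \<Sum>c\<in>{2..k-2-d}. \<Sum>a\<in>{1..k-1-c-d}. card (confined_perm_mats k (A a c d) {0..<c}))"
    by (intro sum_mono card_UN_le) simp
  also have "\<dots> \<le> (\<Sum>d\<in>{..<3}. \<Sum>c\<in>{2..k-2-d}. \<Sum>a\<in>{1..k-1-c-d}. fact (c + d) * fact (k - c))"
  proof (intro sum_mono)
    fix d c a assume "c \<in> {2..k-2-d}" "a \<in> {1..k-1-c-d}"
    moreover from this have "{0..<c} \<subseteq> {..<k}" by auto
    ultimately have "card (confined_perm_mats k (A a c d) {0..<c}) \<le> fact (card (A a c d)) * fact (k - c)"
      using card_confined_perm_mats_le[of "A a c d" k "{0..<c}"] A by simp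
    also have "\<dots> \<le> fact (c + d) * fact (k - c)"
      using A[OF \<open>c \<in> _\<close> \<open>a \<in> _\<close>] by (intro mult_le_mono1 fact_mono) simp
    finally show "card (confined_perm_mats k (A a c d) {0..<c}) \<le> fact (c + d) * fact (k - c)" .
  qed
  also have "\<dots> \<le> (\<Sum>d\<in>{..<3}. \<Sum>c\<in>{2..k-2-d}. k * (fact (c + d) * fact (k - c)))"
    by (intro sum_mono) (simp add: mult_le_mono1)
  also have "\<dots> \<le> (\<Sum>d\<in>{..<3::nat}. 1176 * fact (k - 1))"
    using sum_mult_fact_add_mult_fact_diff_le[OF assms(1)] by (intro sum_mono) simp
  finally show ?thesis by simp
qed

lemma card_class4_family_le:
  assumes "4 \<le> k"
  shows "card (\<Union>m\<in>{2..k-2}. \<Union>a\<in>{1..<k-m}. \<Union>c\<in>{1..<m}.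
      confined_perm_mats k ({..<k} - {a..<a+m}) {c..<c+(k-m)})
    \<le> 60 * fact (k - 1)"
proof -
  have "card (\<Union>m\<in>{2..k-2}. \<Union>a\<in>{1..<k-m}. \<Union>c\<in>{1..<m}.
        confined_perm_mats k ({..<k} - {a..<a+m}) {c..<c+(k-m)})
      \<le> (\<Sum>m\<in>{2..k-2}. \<Sum>a\<in>{1..<k-m}.
        card (\<Union>c\<in>{1..<m}. confined_perm_mats k ({..<k} - {a..<a+m}) {c..<c+(k-m)}))"
    by (rule card_UN_UN_le) simp_all
  also have "\<dots> \<le> (\<Sum>m\<in>{2..k-2}. \<Sum>a\<in>{1..<k-m}. \<Sum>c\<in>{1..<m}.
      card (confined_perm_mats k ({..<k} - {a..<a+m}) {c..<c+(k-m)}))"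
    by (intro sum_mono card_UN_le) simp
  also have "\<dots> \<le> (\<Sum>m\<in>{2..k-2}. \<Sum>a\<in>{1..<k-m}. \<Sum>c\<in>{1..<m}. fact (k - m) * fact m)"
  proof (intro sum_mono)
    fix m a c assume "m \<in> {2..k-2}" "a \<in> {1..<k-m}" "c \<in> {1..<m}"
    moreover from this have "card ({..<k} - {a..<a+m}) = k - m"
      by (subst card_Diff_subset) auto
    moreover from calculation have "{c..<c+(k-m)} \<subseteq> {..<k}" by auto
    ultimately show "card (confined_perm_mats k ({..<k} - {a..<a+m}) {c..<c+(k-m)}) \<le> fact (k - m) * fact m"
      using card_confined_perm_mats_le[of "{..<k} - {a..<a+m}" k "{c..<c+(k-m)}"] by simp
  qed
  also have "\<dots> = (\<Sum>m\<in>{2..k-2}. (k - m - 1) * (m - 1) * (fact (k - m) * fact m))"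
    by (simp add: mult.assoc)
  also have "\<dots> \<le> 60 * fact (k - 1)" by (rule sum_mult_fact_mult_fact_le[OF assms])
  finally show ?thesis .
qed

lemma card_not_ordinary_le_fact_pred:
  assumes "4 \<le> k"
  shows "card {P. perm_mat k P \<and> \<not> ordinary k P} \<le> 58368 * fact (k - 1)"
proof -
  define S1 where "S1 = (\<Union>d\<in>{..<3}. \<Union>b\<in>{1..k-1-d}. confined_perm_mats k {0..<b+d} {0..<b})"
  define S2 where "S2 = (\<Union>d\<in>{..<3}. \<Union>c\<in>{2..k-2-d}. \<Union>a\<in>{1..k-1-c-d}.
    confined_perm_mats k {a..<a+c+d} {0..<c})"
  define S3 where "S3 = (\<Union>d\<in>{..<3}. \<Union>c\<in>{2..k-2-d}. \<Union>a\<in>{1..k-1-c-d}.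
    confined_perm_mats k (insert 0 {a+1..<a+c+d}) {0..<c})"
  define S4 where "S4 = (\<Union>m\<in>{2..k-2}. \<Union>a\<in>{1..<k-m}. \<Union>c\<in>{1..<m}.
    confined_perm_mats k ({..<k} - {a..<a+m}) {c..<c+(k-m)})"
  have "card S1 \<le> 180 * fact (k - 1)" unfolding S1_def by (rule card_class1_family_le[OF assms])
  moreover have "card S2 \<le> 3528 * fact (k - 1)" unfolding S2_def
    by (rule card_class23_family_le[OF assms]) auto
  moreover have "card S3 \<le> 3528 * fact (k - 1)" unfolding S3_def
  proof (rule card_class23_family_le[OF assms])
    fix a c d assume "c \<in> {2..k-2-d}" "a \<in> {1..k-1-c-d}"
    moreover have "card (insert 0 {a+1..<a+c+d}) \<le> Suc (card {a+1..<a+c+d})"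
      by (rule card_insert_le_m1) simp_all
    ultimately show "insert 0 {a+1..<a+c+d} \<subseteq> {..<k} \<and> card (insert 0 {a+1..<a+c+d}) \<le> c + d"
      by auto
  qed
  moreover have "card S4 \<le> 60 * fact (k - 1)" unfolding S4_def by (rule card_class4_family_le[OF assms])
  moreover have "card (S1 \<union> S2 \<union> S3 \<union> S4) \<le> card S1 + card S2 + card S3 + card S4"
    by (meson card_Un_le add_le_mono1 order_trans)
  ultimately have card_S: "card (S1 \<union> S2 \<union> S3 \<union> S4) \<le> 7296 * fact (k - 1)" by linarith
  have "finite (S1 \<union> S2 \<union> S3 \<union> S4)"
    unfolding S1_def S2_def S3_def S4_def confined_perm_mats_def
    by (rule finite_subset[OF _ finite_perm_mat]) blast
  then have "card {P. perm_mat k P \<and> \<not> ordinary k P} \<le> 8 * card (S1 \<union> S2 \<union> S3 \<union> S4)"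
  proof (rule card_not_ordinary_le_eight_card)
    fix Q assume "class1 k Q \<or> class2 k Q \<or> class3 k Q \<or> class4 k Q"
    then show "Q \<in> S1 \<union> S2 \<union> S3 \<union> S4"
    proof (elim disjE)
      assume "class1 k Q" then show ?thesis using class1_confined by (simp add: S1_def)
    next
      assume "class2 k Q" then show ?thesis using class2_confined by (simp add: S2_def)
    next
      assume "class3 k Q" then show ?thesis using class3_confined by (simp add: S3_def)
    next
      assume "class4 k Q" then show ?thesis using class4_confined by (simp add: S4_def)
    qed
  qed
  with card_S show ?thesis by linarith
qed

lemma fact_eq_card_ordinary_add:
  "fact k = card {P. ordinary k P} + card {P. perm_mat k P \<and> \<not> ordinary k P}"
proof -
  have "{P. perm_mat k P} = {P. ordinary k P} \<union> {P. perm_mat k P \<and> \<not> ordinary k P}"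
    by (auto simp: ordinary_def)
  moreover have "finite {P. ordinary k P}" "finite {P. perm_mat k P \<and> \<not> ordinary k P}"
    by (auto simp: ordinary_def intro: rev_finite_subset[OF finite_perm_mat])
  ultimately show ?thesis
    using card_perm_mat[of k] by (metis (no_types, lifting) card_Un_disjoint disjoint_iff mem_Collect_eq)
qed

theorem lemma3:
  shows "(\<lambda>k. real (fact k) - real (card {P. ordinary k P})) \<in> o(\<lambda>k. real (fact k))"
proof -
  let ?bad = "\<lambda>k. {P. perm_mat k P \<and> \<not> ordinary k P}"
  have "real (fact k) - real (card {P. ordinary k P}) = real (card (?bad k))" for k
    using fact_eq_card_ordinary_add[of k] by (metis add_diff_cancel_left' of_nat_add)
  moreover have "(\<lambda>k. real (card (?bad k))) \<in> O(\<lambda>k. real (fact (k - 1)))"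
  proof (intro bigoI[where c = 58368] eventually_mono[OF eventually_ge_at_top[of 4]])
    fix k :: nat assume "4 \<le> k"
    then have "real (card (?bad k)) \<le> real (58368 * fact (k - 1))"
      using card_not_ordinary_le_fact_pred of_nat_le_iff by blast
    then show "norm (real (card (?bad k))) \<le> 58368 * norm (real (fact (k - 1)))" by simp
  qed
  ultimately show ?thesis using fact_diff_one_smallo_fact by (simp add: landau_o.big_small_trans)
qed

end
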